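(* Let $k > d \geq 1$ be integers. There is a function $f = f_{k,d} : \mathbb{N} \to \mathbb{R}$ with $f(N) \to 0$ as $N \to \infty$ such that for every even positive integer $n$, setting $N = (k-1)n - k + 2$, there exists an $N$-vertex $k$-graph $H$ with $\delta_d(H) \geq (1/2 - f(N)) \binom{N-d}{k-d}$ that does not contain the $k$-expansion of any $n$-vertex tree all of whose vertex degrees are odd.
   Context: A $k$-graph is a $k$-uniform hypergraph. For a $k$-graph $H$ and $S \subseteq V(H)$, $\deg_H(S)$ is the number of edges containing $S$, and $\delta_d(H)$ is the minimum of $\deg_H(S)$ over all $d$-subsets $S \subseteq V(H)$. The $k$-expansion $T^{(k)}$ of a graph $T$ is the $k$-graph obtained by replacing each edge $uv$ of $T$ by a $k$-edge consisting of $u$, $v$ and $k-2$ new vertices that belong to no other edge. "Contain" means as a (not necessarily induced) subgraph. *)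

theory Defs
  imports Complex_Main
begin

definition kgraph :: "nat \<Rightarrow> 'a set \<Rightarrow> 'a set set \<Rightarrow> bool" where
  "kgraph k V E \<longleftrightarrow> finite V \<and> (\<forall>e\<in>E. e \<subseteq> V \<and> card e = k)"

definition hdeg :: "'a set set \<Rightarrow> 'a set \<Rightarrow> nat" where
  "hdeg E S = card {e\<in>E. S \<subseteq> e}"

definition min_deg :: "nat \<Rightarrow> 'a set \<Rightarrow> 'a set set \<Rightarrow> nat" where
  "min_deg d V E = Min {hdeg E S | S. S \<subseteq> V \<and> card S = d}"

definition simple_graph :: "nat \<Rightarrow> nat set set \<Rightarrow> bool" where
  "simple_graph n T \<longleftrightarrow> (\<forall>e\<in>T. \<exists>u v. e = {u, v} \<and> u \<noteq> v \<and> u < n \<and> v < n)"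

definition adj :: "nat set set \<Rightarrow> nat \<Rightarrow> nat \<Rightarrow> bool" where
  "adj T u v \<longleftrightarrow> {u, v} \<in> T \<and> u \<noteq> v"

definition connected_graph :: "nat \<Rightarrow> nat set set \<Rightarrow> bool" where
  "connected_graph n T \<longleftrightarrow> (\<forall>u<n. \<forall>v<n. (u, v) \<in> {(x, y). adj T x y}\<^sup>*)"

definition is_cycle :: "nat set set \<Rightarrow> nat list \<Rightarrow> bool" where
  "is_cycle T vs \<longleftrightarrow> length vs \<ge> 3 \<and> distinct vs \<and>
     (\<forall>i. Suc i < length vs \<longrightarrow> adj T (vs ! i) (vs ! Suc i)) \<and>
     adj T (last vs) (hd vs)"

definition is_tree :: "nat \<Rightarrow> nat set set \<Rightarrow> bool" where
  "is_tree n T \<longleftrightarrow> simple_graph n T \<and> connected_graph n T \<and> (\<nexists>vs. is_cycle T vs)"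

definition gdeg :: "nat set set \<Rightarrow> nat \<Rightarrow> nat" where
  "gdeg T v = card {e\<in>T. v \<in> e}"

text \<open>Vertices of T^(k): original vertices Inl v, and for each edge e the k-2
  new vertices Inr (e, i), i < k-2.\<close>
definition exp_vertices :: "nat \<Rightarrow> nat \<Rightarrow> nat set set \<Rightarrow> (nat + nat set \<times> nat) set" where
  "exp_vertices k n T = Inl ` {..<n} \<union> {Inr (e, i) | e i. e \<in> T \<and> i < k - 2}"

definition exp_edge :: "nat \<Rightarrow> nat set \<Rightarrow> (nat + nat set \<times> nat) set" where
  "exp_edge k e = Inl ` e \<union> {Inr (e, i) | i. i < k - 2}"

definition exp_edges :: "nat \<Rightarrow> nat set set \<Rightarrow> (nat + nat set \<times> nat) set set" where
  "exp_edges k T = exp_edge k ` T"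

definition contains :: "'a set \<Rightarrow> 'a set set \<Rightarrow> 'b set \<Rightarrow> 'b set set \<Rightarrow> bool" where
  "contains V E V' E' \<longleftrightarrow> (\<exists>\<phi>. inj_on \<phi> V' \<and> \<phi> ` V' \<subseteq> V \<and> (\<forall>F\<in>E'. \<phi> ` F \<in> E))"

end

theory Submission
  imports Defs "HOL-Combinatorics.Transposition"
begin

text \<open>
  For \<open>k \<ge> 3\<close> the host on \<open>{..<N}\<close> consists of the \<open>k\<close>-sets that meet a fixed set \<open>A\<close>
  of even size about \<open>N / 2\<close> in an odd number of vertices. The expansion of a tree on \<open>n\<close>
  vertices and \<open>n - 1\<close> edges has \<open>n + (n - 1) (k - 2) = N\<close> vertices, so every copy of it
  is spanning. All degrees of the expansion being odd, counting modulo 2 the incidences between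
  its edges and the preimage of \<open>A\<close> gives \<open>|A| = n - 1\<close> modulo 2, impossible as \<open>n\<close> is even.
  For the degree condition pair the vertices as \<open>{2i, 2i + 1}\<close> with \<open>2i \<in> A\<close>. Among the
  \<open>k\<close>-sets through a \<open>d\<close>-set \<open>S\<close>, swapping the first pair that a set splits is an involution
  reversing the parity of the intersection with \<open>A\<close>, and only a fraction \<open>O(1 / N)\<close> of
  these sets split no pair at all.
  For \<open>k = 2\<close> two disjoint cliques on \<open>n / 2\<close> vertices each suffice, since a tree is connected.
\<close>

section \<open>Counting \<open>k\<close>-sets and incidences\<close>

definition k_supersets :: "nat \<Rightarrow> 'a set \<Rightarrow> 'a set \<Rightarrow> 'a set set" where
  "k_supersets k V S = {e. e \<subseteq> V \<and> card e = k \<and> S \<subseteq> e}"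

lemma finite_k_supersets: "finite V \<Longrightarrow> finite (k_supersets k V S)"
  unfolding k_supersets_def by (rule finite_subset[of _ "Pow V"]) auto

lemma card_k_supersets:
  assumes "finite V" "S \<subseteq> V" "card S \<le> k"
  shows "card (k_supersets k V S) = (card V - card S) choose (k - card S)"
proof -
  have "finite S" using assms finite_subset by blast
  have "bij_betw (\<lambda>X. X \<union> S) {X. X \<subseteq> V - S \<and> card X = k - card S} (k_supersets k V S)"
  proof (rule bij_betw_byWitness[where f' = "\<lambda>e. e - S"])
    have "card (X \<union> S) = card X + card S" if "X \<subseteq> V - S" for X
      using that assms \<open>finite S\<close> by (intro card_Un_disjoint) (auto intro: finite_subset)
    then show "(\<lambda>X. X \<union> S) ` {X. X \<subseteq> V - S \<and> card X = k - card S} \<subseteq> k_supersets k V S"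
      using assms by (auto simp: k_supersets_def)
    show "(\<lambda>e. e - S) ` k_supersets k V S \<subseteq> {X. X \<subseteq> V - S \<and> card X = k - card S}"
      using \<open>finite S\<close> by (auto simp: k_supersets_def card_Diff_subset)
  qed (auto simp: k_supersets_def)
  then have "card (k_supersets k V S) = card {X. X \<subseteq> V - S \<and> card X = k - card S}"
    by (simp add: bij_betw_same_card)
  also have "\<dots> = card (V - S) choose (k - card S)"
    using assms by (simp add: n_subsets)
  finally show ?thesis
    using card_Diff_subset[OF \<open>finite S\<close> assms(2)] by (simp only:)
qed

lemma k_supersets_eq_empty:
  assumes "finite V" "k < card S"
  shows "k_supersets k V S = {}"
proof -
  have False if "e \<in> k_supersets k V S" for e
  proof -
    from that have "e \<subseteq> V" "card e = k" "S \<subseteq> e"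
      by (auto simp: k_supersets_def)
    then have "card S \<le> k"
      using assms(1) by (metis card_mono finite_subset)
    with assms(2) show False by simp
  qed
  then show ?thesis by blast
qed

lemma card_k_supersets_insert:
  assumes "finite V" "S \<subseteq> V" "x \<in> V - S"
  shows "(card V - card S) * card (k_supersets k V (insert x S))
           = (k - card S) * card (k_supersets k V S)"
proof (cases "card S < k")
  case True
  have "finite S" using assms finite_subset by blast
  then have "card (insert x S) = Suc (card S)" using assms by simp
  moreover have "Suc (k - Suc (card S)) = k - card S" using True by simp
  ultimately show ?thesis
    using assms True binomial_absorption[of "k - Suc (card S)" "card V - card S"]
    by (simp add: card_k_supersets)
next
  case False
  then have "k < card (insert x S)"
    using assms by (simp add: finite_subset)
  with False show ?thesis
    using assms by (simp add: k_supersets_eq_empty)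
qed

lemma card_k_supersets_insert_insert:
  assumes "finite V" "S \<subseteq> V" "a \<in> V - S" "b \<in> V - S" "a \<noteq> b"
  shows "(card V - card S) * (card V - card S - 1) * card (k_supersets k V (insert a (insert b S)))
           = (k - card S) * (k - card S - 1) * card (k_supersets k V S)"
proof -
  have "card (insert b S) = card S + 1"
    using assms(1,2,4) by (simp add: finite_subset)
  then have "(card V - card S - 1) * card (k_supersets k V (insert a (insert b S)))
      = (k - card S - 1) * card (k_supersets k V (insert b S))"
    using card_k_supersets_insert[of V "insert b S" a k] assms by simp
  moreover have "(card V - card S) * card (k_supersets k V (insert b S)) = (k - card S) * card (k_supersets k V S)"
    using card_k_supersets_insert[of V S b k] assms by simp
  ultimately show ?thesis
    by (metis mult.assoc mult.left_commute)
qed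

lemma card_filter_add_card_filter_not:
  assumes "finite A"
  shows "card {x \<in> A. P x} + card {x \<in> A. \<not> P x} = card A"
proof -
  have "card ({x \<in> A. P x} \<union> {x \<in> A. \<not> P x}) = card {x \<in> A. P x} + card {x \<in> A. \<not> P x}"
    using assms by (intro card_Un_disjoint) auto
  moreover have "{x \<in> A. P x} \<union> {x \<in> A. \<not> P x} = A"
    by blast
  ultimately show ?thesis
    by simp
qed

lemma card_eq_twice_card_if_involution:
  assumes "finite X" and g: "\<And>x. x \<in> X \<Longrightarrow> g x \<in> X \<and> g (g x) = x \<and> (P (g x) \<longleftrightarrow> \<not> P x)"
  shows "card X = 2 * card {x \<in> X. P x}"
proof -
  have "bij_betw g {x \<in> X. \<not> P x} {x \<in> X. P x}"
    by (rule bij_betw_byWitness[where f' = g]) (use g in auto)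
  then have "card {x \<in> X. \<not> P x} = card {x \<in> X. P x}"
    by (rule bij_betw_same_card)
  with card_filter_add_card_filter_not[OF assms(1), of P] show ?thesis
    by simp
qed

lemma even_card_iff_even_card_edges:
  assumes "finite X" "finite Es"
    and odd_edges: "\<And>F. F \<in> Es \<Longrightarrow> odd (card (F \<inter> X))"
    and odd_degrees: "\<And>v. v \<in> X \<Longrightarrow> odd (card {F \<in> Es. v \<in> F})"
  shows "even (card X) \<longleftrightarrow> even (card Es)"
proof -
  have "(\<Sum>F\<in>Es. card {v \<in> X. v \<in> F}) = (\<Sum>v\<in>X. card {F \<in> Es. v \<in> F})"
    by (rule sum_multicount_gen[OF assms(2,1)]) simp
  moreover have "{v \<in> X. v \<in> F} = F \<inter> X" for F
    by blast
  ultimately have sums: "(\<Sum>F\<in>Es. card (F \<inter> X)) = (\<Sum>v\<in>X. card {F \<in> Es. v \<in> F})"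
    by simp
  have "{F \<in> Es. odd (card (F \<inter> X))} = Es"
    using odd_edges by blast
  then have "even (\<Sum>F\<in>Es. card (F \<inter> X)) \<longleftrightarrow> even (card Es)"
    using even_sum_iff[OF assms(2), of "\<lambda>F. card (F \<inter> X)"] by simp
  moreover have "{v \<in> X. odd (card {F \<in> Es. v \<in> F})} = X"
    using odd_degrees by blast
  then have "even (\<Sum>v\<in>X. card {F \<in> Es. v \<in> F}) \<longleftrightarrow> even (card X)"
    using even_sum_iff[OF assms(1), of "\<lambda>v. card {F \<in> Es. v \<in> F}"] by simp
  ultimately show ?thesis
    using sums by simp
qed

section \<open>Trees, expansions and their copies\<close>

lemma finite_simple_graph: "simple_graph n T \<Longrightarrow> finite T"
proof -
  assume "simple_graph n T"
  then have "T \<subseteq> Pow {..<n}"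
    unfolding simple_graph_def by auto
  then show "finite T"
    by (rule finite_subset) simp
qed

lemma connected_graph_invariant:
  assumes "connected_graph n T" and step: "\<And>u v. adj T u v \<Longrightarrow> P u \<longleftrightarrow> P v"
    and "u < n" "v < n"
  shows "P u \<longleftrightarrow> P v"
proof -
  have "(u, v) \<in> {(x, y). adj T x y}\<^sup>*"
    using assms unfolding connected_graph_def by blast
  then show ?thesis
    by induction (use step in auto)
qed

text \<open>Every vertex other than 0 is joined to a vertex strictly closer to 0; these
  edges are pairwise distinct.\<close>
lemma connected_graph_card_ge:
  assumes "connected_graph n T" "0 < n" "finite T"
  shows "n - 1 \<le> card T"
proof -
  define R where "R = {(x, y). adj T x y}"
  define dist where "dist v = (LEAST m. (0, v) \<in> R ^^ m)" for v
  have "\<exists>u. (0, u) \<in> R ^^ (dist v - 1) \<and> adj T u v \<and> 0 < dist v" if "v < n" "v \<noteq> 0" for v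
  proof -
    have "(0, v) \<in> R\<^sup>*"
      using assms that unfolding connected_graph_def R_def by blast
    then have "(0, v) \<in> R ^^ dist v"
      unfolding dist_def rtrancl_power by (rule LeastI_ex)
    moreover from this have "dist v \<noteq> 0"
      using that by (intro notI) simp
    ultimately obtain m where "dist v = Suc m" "(0, v) \<in> R ^^ Suc m"
      by (metis not0_implies_Suc)
    then show ?thesis
      unfolding R_def by auto
  qed
  then obtain par where par: "\<And>v. v < n \<Longrightarrow> v \<noteq> 0 \<Longrightarrow>
      (0, par v) \<in> R ^^ (dist v - 1) \<and> adj T (par v) v \<and> 0 < dist v"
    by metis
  have closer: "dist (par v) < dist v" if "v < n" "v \<noteq> 0" for v
  proof -
    have "dist (par v) \<le> dist v - 1"
      unfolding dist_def[of "par v"] by (rule Least_le) (use par[OF that] in blast)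
    then show ?thesis
      using par[OF that] by linarith
  qed
  have "inj_on (\<lambda>v. {par v, v}) {1..<n}"
  proof (rule inj_onI)
    fix v w assume "v \<in> {1..<n}" "w \<in> {1..<n}" "{par v, v} = {par w, w}"
    then show "v = w"
      using closer[of v] closer[of w] by (auto simp: doubleton_eq_iff)
  qed
  moreover have "(\<lambda>v. {par v, v}) ` {1..<n} \<subseteq> T"
    using par unfolding adj_def by auto
  ultimately show ?thesis
    using card_inj_on_le[OF _ _ assms(3)] by fastforce
qed

lemma Inl_in_exp_edge [simp]: "Inl u \<in> exp_edge k e \<longleftrightarrow> u \<in> e"
  unfolding exp_edge_def by auto

lemma Inr_in_exp_edge [simp]: "Inr (e', i) \<in> exp_edge k e \<longleftrightarrow> e' = e \<and> i < k - 2"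
  unfolding exp_edge_def by auto

lemma inj_on_exp_edge: "inj_on (exp_edge k) X"
  by (rule inj_onI) (metis Inl_in_exp_edge subsetI subset_antisym)

lemma exp_vertices_eq: "exp_vertices k n T = Inl ` {..<n} \<union> Inr ` (T \<times> {..<k - 2})"
  unfolding exp_vertices_def by auto

lemma card_exp_vertices:
  assumes "finite T"
  shows "card (exp_vertices k n T) = n + card T * (k - 2)"
proof -
  have "card (Inl ` {..<n} \<union> Inr ` (T \<times> {..<k - 2}) :: (nat + nat set \<times> nat) set)
      = card (Inl ` {..<n} :: (nat + nat set \<times> nat) set) + card (Inr ` (T \<times> {..<k - 2}) :: (nat + nat set \<times> nat) set)"
    using assms by (intro card_Un_disjoint) auto
  also have "\<dots> = n + card T * (k - 2)"
    by (simp add: card_image card_cartesian_product)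
  finally show ?thesis
    unfolding exp_vertices_eq .
qed

lemma card_exp_edges: "card (exp_edges k T) = card T"
  unfolding exp_edges_def by (simp add: card_image inj_on_exp_edge)

lemma exp_edge_subset_exp_vertices:
  assumes "simple_graph n T" "e \<in> T"
  shows "exp_edge k e \<subseteq> exp_vertices k n T"
  using assms unfolding simple_graph_def exp_vertices_eq exp_edge_def by fastforce

lemma odd_degree_exp_vertices:
  assumes "v \<in> exp_vertices k n T" "\<forall>u<n. odd (gdeg T u)"
  shows "odd (card {F \<in> exp_edges k T. v \<in> F})"
proof (cases v)
  case (Inl u)
  then have "u < n"
    using assms(1) unfolding exp_vertices_def by auto
  have "{F \<in> exp_edges k T. v \<in> F} = exp_edge k ` {e \<in> T. u \<in> e}"
    unfolding exp_edges_def Inl by auto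
  then have "card {F \<in> exp_edges k T. v \<in> F} = gdeg T u"
    unfolding gdeg_def by (simp add: card_image inj_on_exp_edge)
  then show ?thesis
    using assms(2) \<open>u < n\<close> by simp
next
  case (Inr p)
  then obtain e i where "v = Inr (e, i)" "e \<in> T" "i < k - 2"
    using assms(1) unfolding exp_vertices_def by auto
  then have "{F \<in> exp_edges k T. v \<in> F} = {exp_edge k e}"
    unfolding exp_edges_def by auto
  then show ?thesis
    by simp
qed

lemma contains_card_le: "contains V E V' E' \<Longrightarrow> finite V \<Longrightarrow> card V' \<le> card V"
  unfolding contains_def by (metis card_inj_on_le)

text \<open>Count the incidences between the edges of the copy and the preimage of \<open>A\<close>
  in two ways.\<close>
lemma spanning_copy_parity:
  assumes "contains V E V' E'" "finite V" "finite V'" "card V' = card V" "finite E'"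
    and edges_sub: "\<And>F. F \<in> E' \<Longrightarrow> F \<subseteq> V'"
    and odd_degrees: "\<And>v. v \<in> V' \<Longrightarrow> odd (card {F \<in> E'. v \<in> F})"
    and "A \<subseteq> V" and odd_edges: "\<And>e. e \<in> E \<Longrightarrow> odd (card (e \<inter> A))"
  shows "even (card A) \<longleftrightarrow> even (card E')"
proof -
  obtain \<phi> where inj: "inj_on \<phi> V'" and sub: "\<phi> ` V' \<subseteq> V" and copy: "\<forall>F\<in>E'. \<phi> ` F \<in> E"
    using assms(1) unfolding contains_def by blast
  have onto: "\<phi> ` V' = V"
    by (rule card_subset_eq[OF assms(2) sub]) (simp add: card_image[OF inj] assms(4))
  define X where "X = {v \<in> V'. \<phi> v \<in> A}"
  have "finite X"
    using assms(3) unfolding X_def by simp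
  have "\<phi> ` X = A"
    using onto \<open>A \<subseteq> V\<close> unfolding X_def by blast
  moreover have "inj_on \<phi> X"
    using inj unfolding X_def by (rule inj_on_subset) blast
  ultimately have "card X = card A"
    by (metis card_image)
  moreover have "odd (card (F \<inter> X))" if "F \<in> E'" for F
  proof -
    have "\<phi> ` F \<inter> A = \<phi> ` (F \<inter> X)"
      using edges_sub[OF that] unfolding X_def by blast
    moreover have "inj_on \<phi> (F \<inter> X)"
      using inj unfolding X_def by (rule inj_on_subset) blast
    ultimately have "card (F \<inter> X) = card (\<phi> ` F \<inter> A)"
      by (simp add: card_image)
    then show ?thesis
      using odd_edges copy that by simp
  qed
  moreover have "odd (card {F \<in> E'. v \<in> F})" if "v \<in> X" for v
    using odd_degrees that unfolding X_def by blast
  ultimately show ?thesis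
    using even_card_iff_even_card_edges[OF \<open>finite X\<close> assms(5)] by simp
qed

lemma connected_copy_on_one_side:
  assumes "connected_graph n T" "contains V E (exp_vertices 2 n T) (exp_edges 2 T)"
    and "finite V" "card V = n" and sides: "\<And>e. e \<in> E \<Longrightarrow> e \<subseteq> X \<or> e \<inter> X = {}"
  shows "V \<subseteq> X \<or> V \<inter> X = {}"
proof -
  have vertices: "exp_vertices 2 n T = Inl ` {..<n}"
    unfolding exp_vertices_eq by simp
  obtain \<phi> where inj: "inj_on \<phi> (Inl ` {..<n})" and sub: "\<phi> ` Inl ` {..<n} \<subseteq> V"
    and copy: "\<forall>F\<in>exp_edges 2 T. \<phi> ` F \<in> E"
    using assms(2) unfolding contains_def vertices by blast
  have onto: "\<phi> ` Inl ` {..<n} = V"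
    by (rule card_subset_eq[OF assms(3) sub]) (simp add: card_image[OF inj] card_image assms(4))
  have same_side: "\<phi> (Inl u) \<in> X \<longleftrightarrow> \<phi> (Inl 0) \<in> X" if "u < n" for u
  proof (rule connected_graph_invariant[OF assms(1) _ that])
    fix u v assume "adj T u v"
    then have "\<phi> ` exp_edge 2 {u, v} \<in> E"
      using copy unfolding adj_def exp_edges_def by blast
    moreover have "\<phi> (Inl u) \<in> \<phi> ` exp_edge 2 {u, v}" "\<phi> (Inl v) \<in> \<phi> ` exp_edge 2 {u, v}"
      by simp_all
    ultimately show "\<phi> (Inl u) \<in> X \<longleftrightarrow> \<phi> (Inl v) \<in> X"
      using sides by blast
  qed (use that in simp)
  show ?thesis
    using same_side onto by (cases "\<phi> (Inl 0) \<in> X") blast+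
qed

section \<open>The host hypergraphs\<close>

lemma min_deg_ge:
  fixes b :: real
  assumes "d \<le> N" and "\<And>S. S \<subseteq> {..<N} \<Longrightarrow> card S = d \<Longrightarrow> b \<le> real (hdeg E S)"
  shows "b \<le> real (min_deg d {..<N} E)"
proof -
  let ?Ss = "{S. S \<subseteq> {..<N} \<and> card S = d}"
  have "finite ?Ss"
    by (rule finite_subset[of _ "Pow {..<N}"]) auto
  moreover have "{..<d} \<in> ?Ss"
    using assms(1) by auto
  ultimately have "Min (hdeg E ` ?Ss) \<in> hdeg E ` ?Ss"
    by (intro Min_in finite_imageI) blast+
  moreover have "min_deg d {..<N} E = Min (hdeg E ` ?Ss)"
    unfolding min_deg_def by (rule arg_cong[where f = Min]) blast
  ultimately show ?thesis
    using assms(2) by auto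
qed

definition two_cliques :: "nat \<Rightarrow> nat \<Rightarrow> nat set set" where
  "two_cliques n h = {e. e \<subseteq> {..<n} \<and> card e = 2 \<and> (e \<subseteq> {..<h} \<or> e \<inter> {..<h} = {})}"

lemma kgraph_two_cliques: "kgraph 2 {..<n} (two_cliques n h)"
  unfolding kgraph_def two_cliques_def by simp

lemma hdeg_two_cliques_ge:
  assumes "v < 2 * h"
  shows "h - 1 \<le> hdeg (two_cliques (2 * h) h) {v}"
proof -
  define clique where "clique = (if v < h then {..<h} else {h..<2 * h})"
  have "v \<in> clique" "card clique = h"
    using assms unfolding clique_def by auto
  have "inj_on (\<lambda>w. {v, w}) (clique - {v})"
    by (rule inj_onI) (auto simp: doubleton_eq_iff)
  moreover have "(\<lambda>w. {v, w}) ` (clique - {v}) \<subseteq> {e \<in> two_cliques (2 * h) h. {v} \<subseteq> e}"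
    using assms unfolding clique_def two_cliques_def by (auto split: if_splits)
  moreover have "finite {e \<in> two_cliques (2 * h) h. {v} \<subseteq> e}"
    by (rule finite_subset[of _ "Pow {..<2 * h}"]) (auto simp: two_cliques_def)
  ultimately have "card (clique - {v}) \<le> hdeg (two_cliques (2 * h) h) {v}"
    unfolding hdeg_def by (rule card_inj_on_le)
  moreover have "card (clique - {v}) = h - 1"
    using \<open>v \<in> clique\<close> \<open>card clique = h\<close> by (simp add: card_Diff_singleton)
  ultimately show ?thesis
    by simp
qed

lemma min_deg_two_cliques_ge:
  assumes "0 < h"
  shows "(1 / 2 - 1 / real (2 * h)) * real (2 * h - 1) \<le> real (min_deg 1 {..<2 * h} (two_cliques (2 * h) h))"
proof (rule min_deg_ge)
  show "1 \<le> 2 * h"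
    using assms by simp
  fix S assume "S \<subseteq> {..<2 * h}" "card S = 1"
  then obtain v where "S = {v}" "v < 2 * h"
    by (auto simp: card_Suc_eq)
  have "(1 / 2 - 1 / real (2 * h)) * real (2 * h - 1) = real h - 3 / 2 + 1 / real (2 * h)"
    using assms by (simp add: of_nat_diff field_simps)
  also have "\<dots> \<le> real h - 1"
    using assms by (simp add: field_simps)
  also have "\<dots> = real (h - 1)"
    using assms by (simp add: of_nat_diff)
  also have "\<dots> \<le> real (hdeg (two_cliques (2 * h) h) S)"
    using hdeg_two_cliques_ge[OF \<open>v < 2 * h\<close>] \<open>S = {v}\<close> by simp
  finally show "(1 / 2 - 1 / real (2 * h)) * real (2 * h - 1) \<le> real (hdeg (two_cliques (2 * h) h) S)" .
qed

lemma two_cliques_excludes_tree_expansions: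
  assumes "0 < h" "h < n" "is_tree n T"
  shows "\<not> contains {..<n} (two_cliques n h) (exp_vertices 2 n T) (exp_edges 2 T)"
proof
  assume copy: "contains {..<n} (two_cliques n h) (exp_vertices 2 n T) (exp_edges 2 T)"
  have "connected_graph n T"
    using assms(3) unfolding is_tree_def by blast
  moreover have "e \<subseteq> {..<h} \<or> e \<inter> {..<h} = {}" if "e \<in> two_cliques n h" for e
    using that unfolding two_cliques_def by blast
  ultimately have "{..<n} \<subseteq> {..<h} \<or> {..<n} \<inter> {..<h} = {}"
    using connected_copy_on_one_side[OF _ copy finite_lessThan card_lessThan] by blast
  moreover have "\<not> {..<n} \<subseteq> {..<h}"
    using assms(2) by auto
  moreover have "0 \<in> {..<n} \<inter> {..<h}"
    using assms(1,2) by simp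
  ultimately show False
    by blast
qed

definition evens :: "nat \<Rightarrow> nat set" where
  "evens q = {x. x < 2 * q \<and> even x}"

lemma card_evens: "card (evens q) = q"
proof -
  have "evens q = (\<lambda>i. 2 * i) ` {..<q}"
    unfolding evens_def by (auto elim!: evenE)
  then show ?thesis
    by (simp add: card_image inj_on_def)
qed

definition odd_kgraph :: "nat \<Rightarrow> nat \<Rightarrow> nat set \<Rightarrow> nat set set" where
  "odd_kgraph k N A = {e. e \<subseteq> {..<N} \<and> card e = k \<and> odd (card (e \<inter> A))}"

lemma kgraph_odd_kgraph: "kgraph k {..<N} (odd_kgraph k N A)"
  unfolding kgraph_def odd_kgraph_def by simp

lemma card_tree_edges_if_card_exp_vertices_le:
  assumes "3 \<le> k" "0 < n" "is_tree n T"
    and "card (exp_vertices k n T) \<le> n + (n - 1) * (k - 2)"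
  shows "card T = n - 1"
proof -
  have "simple_graph n T" "connected_graph n T"
    using assms(3) unfolding is_tree_def by blast+
  then have "finite T"
    by (intro finite_simple_graph)
  then have "card T * (k - 2) \<le> (n - 1) * (k - 2)"
    using assms(4) card_exp_vertices[of T k n] by simp
  then have "card T \<le> n - 1"
    using assms(1) by simp
  moreover have "n - 1 \<le> card T"
    using connected_graph_card_ge[OF \<open>connected_graph n T\<close> assms(2) \<open>finite T\<close>] .
  ultimately show ?thesis
    by simp
qed

lemma odd_kgraph_excludes_odd_tree_expansions:
  assumes "3 \<le> k" "even n" "0 < n" and N: "N = (k - 1) * n - k + 2"
    and "A \<subseteq> {..<N}" "even (card A)"
    and "is_tree n T" and odd_degrees: "\<forall>v<n. odd (gdeg T v)"
  shows "\<not> contains {..<N} (odd_kgraph k N A) (exp_vertices k n T) (exp_edges k T)"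
proof
  assume copy: "contains {..<N} (odd_kgraph k N A) (exp_vertices k n T) (exp_edges k T)"
  have "2 \<le> n"
    using assms(2,3) by presburger
  have N_eq: "N = n + (n - 1) * (k - 2)"
  proof -
    obtain m j where "n = m + 2" "k = j + 3"
      using \<open>2 \<le> n\<close> assms(1) by (metis le_add_diff_inverse2)
    then show ?thesis
      unfolding N by (simp add: algebra_simps)
  qed
  have "simple_graph n T"
    using \<open>is_tree n T\<close> unfolding is_tree_def by blast
  then have "finite T"
    by (intro finite_simple_graph)
  have edges: "card T = n - 1"
    using card_tree_edges_if_card_exp_vertices_le[OF assms(1,3) \<open>is_tree n T\<close>]
      contains_card_le[OF copy] N_eq by simp
  have "even (card A) \<longleftrightarrow> even (card (exp_edges k T))"
  proof (rule spanning_copy_parity[OF copy])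
    show "card (exp_vertices k n T) = card {..<N}"
      using card_exp_vertices[OF \<open>finite T\<close>] edges N_eq by simp
    show "finite (exp_vertices k n T)" "finite (exp_edges k T)"
      using \<open>finite T\<close> by (simp_all add: exp_vertices_eq exp_edges_def)
    show "F \<subseteq> exp_vertices k n T" if "F \<in> exp_edges k T" for F
      using that exp_edge_subset_exp_vertices[OF \<open>simple_graph n T\<close>] unfolding exp_edges_def by blast
    show "odd (card {F \<in> exp_edges k T. v \<in> F})" if "v \<in> exp_vertices k n T" for v
      using odd_degree_exp_vertices[OF that odd_degrees] .
    show "odd (card (e \<inter> A))" if "e \<in> odd_kgraph k N A" for e
      using that unfolding odd_kgraph_def by blast
  qed (use assms in auto)
  then show False
    using edges card_exp_edges \<open>2 \<le> n\<close> assms(2,6) by simp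
qed

lemma odd_card_transpose_image_Int:
  assumes "finite e" "a \<in> A" "b \<notin> A" "a \<in> e \<longleftrightarrow> b \<notin> e"
  shows "odd (card (transpose a b ` e \<inter> A)) \<longleftrightarrow> even (card (e \<inter> A))"
proof (cases "a \<in> e")
  case True
  then have "transpose a b ` e \<inter> A = (e \<inter> A) - {a}"
    using assms(2-4) unfolding set_eq_iff Int_iff Diff_iff in_transpose_image_iff
    by (auto simp: transpose_def)
  moreover have "Suc (card ((e \<inter> A) - {a})) = card (e \<inter> A)"
    using True assms(1,2) by (intro card_Suc_Diff1) auto
  ultimately show ?thesis
    by (metis even_Suc)
next
  case False
  then have "transpose a b ` e \<inter> A = insert a (e \<inter> A)"
    using assms(2-4) unfolding set_eq_iff Int_iff insert_iff in_transpose_image_iff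
    by (auto simp: transpose_def)
  then show ?thesis
    using False assms(1) by simp
qed

text \<open>Pair \<open>i\<close> is \<open>{2 * i, Suc (2 * i)}\<close>; exactly its even element lies in \<open>evens q\<close>.\<close>
locale free_pairs =
  fixes q :: nat and S :: "nat set"
begin

definition free :: "nat \<Rightarrow> bool" where
  "free i \<longleftrightarrow> i < q \<and> 2 * i \<notin> S \<and> Suc (2 * i) \<notin> S"

definition splits :: "nat set \<Rightarrow> nat \<Rightarrow> bool" where
  "splits e i \<longleftrightarrow> free i \<and> (2 * i \<in> e \<longleftrightarrow> Suc (2 * i) \<notin> e)"

definition flip :: "nat set \<Rightarrow> nat set" where
  "flip e = (let i = LEAST i. splits e i in transpose (2 * i) (Suc (2 * i)) ` e)"

lemma splits_transpose_image_iff: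
  "splits (transpose (2 * i) (Suc (2 * i)) ` e) j \<longleftrightarrow> splits e j"
proof -
  have "2 * j \<noteq> Suc (2 * i)" "Suc (2 * j) \<noteq> 2 * i"
    by presburger+
  then show ?thesis
    unfolding splits_def in_transpose_image_iff transpose_def by auto
qed

lemma splits_flip_iff: "splits (flip e) j \<longleftrightarrow> splits e j"
  unfolding flip_def Let_def by (rule splits_transpose_image_iff)

lemma flip_flip: "flip (flip e) = e"
proof -
  have "(LEAST i. splits (flip e) i) = (LEAST i. splits e i)"
    by (simp add: splits_flip_iff)
  then show ?thesis
    unfolding flip_def[of "flip e"] unfolding flip_def Let_def by (simp add: image_image)
qed

lemma odd_card_flip_Int_evens:
  assumes "splits e i" "finite e"
  shows "odd (card (flip e \<inter> evens q)) \<longleftrightarrow> even (card (e \<inter> evens q))"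
proof -
  define m where "m = (LEAST i. splits e i)"
  have "splits e m"
    unfolding m_def using assms(1) by (rule LeastI)
  then show ?thesis
    unfolding flip_def m_def[symmetric] Let_def
    by (intro odd_card_transpose_image_Int[OF assms(2)]) (auto simp: splits_def free_def evens_def)
qed

lemma flip_in_k_supersets:
  assumes "splits e i" "2 * q \<le> N" "e \<in> k_supersets k {..<N} S"
  shows "flip e \<in> k_supersets k {..<N} S"
proof -
  define m where "m = (LEAST i. splits e i)"
  have "free m"
    unfolding m_def using LeastI[of "splits e", OF assms(1)] splits_def by blast
  then have "Suc (2 * m) < N"
    using assms(2) unfolding free_def by linarith
  then have "transpose (2 * m) (Suc (2 * m)) ` e \<subseteq> {..<N}"
    using assms(3) unfolding k_supersets_def by (auto simp: transpose_def)
  moreover have "S \<subseteq> transpose (2 * m) (Suc (2 * m)) ` e"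
    using \<open>free m\<close> assms(3) unfolding k_supersets_def free_def
    by (auto simp: in_transpose_image_iff transpose_def)
  moreover have "card (transpose (2 * m) (Suc (2 * m)) ` e) = card e"
    by (simp add: card_image)
  ultimately show ?thesis
    using assms(3) unfolding flip_def m_def[symmetric] Let_def k_supersets_def by simp
qed

lemma card_splitting_le:
  assumes "2 * q \<le> N"
  shows "card {e \<in> k_supersets k {..<N} S. \<exists>i. splits e i}
           \<le> 2 * card {e \<in> k_supersets k {..<N} S. odd (card (e \<inter> evens q))}"
proof -
  let ?K = "k_supersets k {..<N} S"
  let ?split = "{e \<in> ?K. \<exists>i. splits e i}"
  have "card ?split = 2 * card {e \<in> ?split. odd (card (e \<inter> evens q))}"
  proof (rule card_eq_twice_card_if_involution)
    show "finite ?split"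
      by (simp add: finite_k_supersets)
    fix e assume "e \<in> ?split"
    then obtain i where "e \<in> ?K" "splits e i"
      by blast
    moreover have "finite e"
      using \<open>e \<in> ?K\<close> unfolding k_supersets_def by (auto intro: finite_subset)
    ultimately show "flip e \<in> ?split \<and> flip (flip e) = e
        \<and> (odd (card (flip e \<inter> evens q)) \<longleftrightarrow> \<not> odd (card (e \<inter> evens q)))"
      using flip_in_k_supersets[OF _ assms] odd_card_flip_Int_evens splits_flip_iff flip_flip
      by blast
  qed
  also have "\<dots> \<le> 2 * card {e \<in> ?K. odd (card (e \<inter> evens q))}"
    by (intro mult_le_mono2 card_mono) (auto simp: finite_k_supersets)
  finally show ?thesis .
qed

lemma unsplit_covered:
  assumes "e \<in> k_supersets k {..<N} S" "\<nexists>i. splits e i" "card S < k"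
  shows "(\<exists>x \<in> {..<N} - S. \<not> free (x div 2) \<and> e \<in> k_supersets k {..<N} (insert x S))
    \<or> (\<exists>i. free i \<and> e \<in> k_supersets k {..<N} (insert (2 * i) (insert (Suc (2 * i)) S)))"
proof -
  have e: "e \<subseteq> {..<N}" "card e = k" "S \<subseteq> e"
    using assms(1) unfolding k_supersets_def by auto
  have "\<not> e \<subseteq> S"
  proof
    assume "e \<subseteq> S"
    then have "e = S"
      using e(3) by (rule subset_antisym)
    then show False
      using e(2) assms(3) by simp
  qed
  then obtain x where "x \<in> e" "x \<notin> S"
    by blast
  then have "x < N"
    using e(1) by blast
  define i where "i = x div 2"
  have x_in_pair: "x = 2 * i \<or> x = Suc (2 * i)"
    unfolding i_def by presburger
  show ?thesis
  proof (cases "free i")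
    case True
    then have "2 * i \<in> e" "Suc (2 * i) \<in> e"
      using assms(2) x_in_pair \<open>x \<in> e\<close> unfolding splits_def by blast+
    then show ?thesis
      using True e unfolding k_supersets_def by blast
  next
    case False
    then show ?thesis
      using \<open>x \<in> e\<close> \<open>x \<notin> S\<close> \<open>x < N\<close> e unfolding i_def k_supersets_def by blast
  qed
qed

text \<open>A vertex outside \<open>S\<close> whose pair is not free lies beyond the pairs or is the
  partner of a vertex of \<open>S\<close>.\<close>
lemma card_non_free_le:
  assumes "finite S"
  shows "card {x \<in> {..<N} - S. \<not> free (x div 2)} \<le> (N - 2 * q) + card S"
proof -
  define mate where "mate x = (if even x then Suc x else x - 1)" for x :: nat
  have "{x \<in> {..<N} - S. \<not> free (x div 2)} \<subseteq> {2 * q..<N} \<union> mate ` S"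
  proof
    fix x assume x: "x \<in> {x \<in> {..<N} - S. \<not> free (x div 2)}"
    show "x \<in> {2 * q..<N} \<union> mate ` S"
    proof (cases "2 * q \<le> x")
      case False
      have "x = 2 * (x div 2) \<and> mate x = Suc (2 * (x div 2)) \<or> x = Suc (2 * (x div 2)) \<and> mate x = 2 * (x div 2)"
        unfolding mate_def by presburger
      then have "mate x \<in> S"
        using x False unfolding free_def by auto
      moreover have "x = mate (mate x)"
        unfolding mate_def by presburger
      ultimately show ?thesis
        by blast
    qed (use x in auto)
  qed
  then have "card {x \<in> {..<N} - S. \<not> free (x div 2)} \<le> card ({2 * q..<N} \<union> mate ` S)"
    using assms by (intro card_mono) auto
  also have "\<dots> \<le> card {2 * q..<N} + card (mate ` S)"
    by (rule card_Un_le)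
  also have "\<dots> \<le> (N - 2 * q) + card S"
    using card_image_le[OF assms] by simp
  finally show ?thesis .
qed

lemma card_unsplit_le_sum:
  assumes "card S < k"
  shows "card {e \<in> k_supersets k {..<N} S. \<nexists>i. splits e i}
    \<le> (\<Sum>x\<in>{x \<in> {..<N} - S. \<not> free (x div 2)}. card (k_supersets k {..<N} (insert x S)))
      + (\<Sum>i\<in>{i. free i}. card (k_supersets k {..<N} (insert (2 * i) (insert (Suc (2 * i)) S))))"
proof -
  let ?K = "k_supersets k {..<N}"
  define D where "D = {x \<in> {..<N} - S. \<not> free (x div 2)}"
  define F where "F = {i. free i}"
  define pair where "pair i = insert (2 * i) (insert (Suc (2 * i)) S)" for i
  have "finite D" "finite F"
    unfolding D_def F_def free_def by auto
  have "{e \<in> ?K S. \<nexists>i. splits e i} \<subseteq> (\<Union>x\<in>D. ?K (insert x S)) \<union> (\<Union>i\<in>F. ?K (pair i))"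
    using unsplit_covered assms unfolding D_def F_def pair_def by fastforce
  then have "card {e \<in> ?K S. \<nexists>i. splits e i}
      \<le> card ((\<Union>x\<in>D. ?K (insert x S)) \<union> (\<Union>i\<in>F. ?K (pair i)))"
    by (rule card_mono[rotated]) (simp add: \<open>finite D\<close> \<open>finite F\<close> finite_k_supersets)
  also have "\<dots> \<le> (\<Sum>x\<in>D. card (?K (insert x S))) + (\<Sum>i\<in>F. card (?K (pair i)))"
    using card_Un_le add_mono[OF card_UN_le[OF \<open>finite D\<close>] card_UN_le[OF \<open>finite F\<close>]] by (rule order.trans)
  finally show ?thesis
    unfolding D_def F_def pair_def .
qed

lemma card_unsplit_le:
  assumes "2 * q \<le> N" "N \<le> 2 * q + 3" "S \<subseteq> {..<N}" "card S = d" "d < k"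
  shows "(N - d - 1) * card {e \<in> k_supersets k {..<N} S. \<nexists>i. splits e i}
           \<le> (k - d) * (d + 3 + (d + 1) * (k - d - 1)) * card (k_supersets k {..<N} S)"
proof (cases "N - d = 0")
  case False
  define M where "M = N - d"
  let ?K = "k_supersets k {..<N}"
  define C where "C = card (?K S)"
  define D where "D = {x \<in> {..<N} - S. \<not> free (x div 2)}"
  define F where "F = {i. free i}"
  have "finite S"
    using finite_subset[OF assms(3)] by simp
  have card_D: "card D \<le> d + 3"
    using card_non_free_le[OF \<open>finite S\<close>, of N] assms(1,2,4) unfolding D_def by linarith
  have "N \<le> (d + 1) * M"
  proof -
    have "N = M + d" "0 < M"
      using False unfolding M_def by simp_all
    moreover from this(2) have "d * 1 \<le> d * M"
      by (intro mult_le_mono2) simp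
    ultimately show ?thesis
      by (simp add: distrib_right)
  qed
  moreover have "card F \<le> q"
    using card_mono[of "{..<q}" F] unfolding F_def free_def by auto
  ultimately have card_F: "card F \<le> (d + 1) * M"
    using assms(1) by linarith
  have single: "M * card (?K (insert x S)) = (k - d) * C" if "x \<in> D" for x
    using card_k_supersets_insert[of "{..<N}" S x k] that assms(3,4)
    unfolding D_def M_def C_def by simp
  have double: "M * (M - 1) * card (?K (insert (2 * i) (insert (Suc (2 * i)) S))) = (k - d - 1) * ((k - d) * C)"
    if "i \<in> F" for i
    using card_k_supersets_insert_insert[of "{..<N}" S "2 * i" "Suc (2 * i)" k] that assms(1,3,4)
    unfolding F_def free_def M_def C_def by (simp add: ac_simps)
  have "M * ((M - 1) * card {e \<in> ?K S. \<nexists>i. splits e i})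
      \<le> (M - 1) * (\<Sum>x\<in>D. M * card (?K (insert x S)))
        + (\<Sum>i\<in>F. M * (M - 1) * card (?K (insert (2 * i) (insert (Suc (2 * i)) S))))"
    using mult_le_mono2[OF card_unsplit_le_sum[of k N], of "M * (M - 1)"] assms(4,5)
    unfolding D_def F_def by (simp add: sum_distrib_left algebra_simps)
  also have "\<dots> = (M - 1) * (card D * ((k - d) * C)) + card F * ((k - d - 1) * ((k - d) * C))"
    using single double by simp
  also have "\<dots> \<le> M * ((d + 3) * ((k - d) * C)) + ((d + 1) * M) * ((k - d - 1) * ((k - d) * C))"
    using card_D card_F by (intro add_mono mult_mono) auto
  also have "\<dots> = M * ((k - d) * (d + 3 + (d + 1) * (k - d - 1)) * C)"
  proof -
    have "M * ((d + 3) * (a * C)) + ((d + 1) * M) * (b * (a * C)) = M * (a * (d + 3 + (d + 1) * b) * C)"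
      for a b :: nat
      by (simp add: algebra_simps)
    then show ?thesis .
  qed
  finally show ?thesis
    using False unfolding M_def C_def by simp
qed simp

end

lemma hdeg_odd_kgraph_ge:
  assumes "d < k" "2 * q \<le> N" "N \<le> 2 * q + 3" "S \<subseteq> {..<N}" "card S = d"
  shows "(N - d - 1) * ((N - d) choose (k - d))
    \<le> 2 * (N - d - 1) * hdeg (odd_kgraph k N (evens q)) S
      + (k - d) * (d + 3 + (d + 1) * (k - d - 1)) * ((N - d) choose (k - d))"
proof -
  interpret free_pairs q S .
  let ?K = "k_supersets k {..<N} S"
  let ?split = "{e \<in> ?K. \<exists>i. splits e i}" and ?unsplit = "{e \<in> ?K. \<nexists>i. splits e i}"
  let ?c = "(k - d) * (d + 3 + (d + 1) * (k - d - 1))"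
  have K: "card ?K = (N - d) choose (k - d)"
    using card_k_supersets[of "{..<N}" S k] assms by simp
  have hdeg: "hdeg (odd_kgraph k N (evens q)) S = card {e \<in> ?K. odd (card (e \<inter> evens q))}"
    unfolding hdeg_def odd_kgraph_def k_supersets_def by (rule arg_cong[where f = card]) auto
  have "card ?split + card ?unsplit = card ?K"
    by (rule card_filter_add_card_filter_not) (simp add: finite_k_supersets)
  then have "(N - d - 1) * card ?K = (N - d - 1) * card ?split + (N - d - 1) * card ?unsplit"
    by (simp flip: add_mult_distrib2)
  also have "\<dots> \<le> (N - d - 1) * (2 * hdeg (odd_kgraph k N (evens q)) S) + ?c * card ?K"
    unfolding hdeg using card_splitting_le[OF assms(2), of k] card_unsplit_le[OF assms(2-5,1)]
    by (intro add_mono mult_le_mono2)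
  finally show ?thesis
    unfolding K by (simp add: ac_simps)
qed

text \<open>For \<open>N < d + 2\<close> the bound of \<open>hdeg_odd_kgraph_ge\<close> is empty, and the value \<open>1\<close>
  makes the degree condition trivial.\<close>
definition odd_kgraph_defect :: "nat \<Rightarrow> nat \<Rightarrow> nat \<Rightarrow> real" where
  "odd_kgraph_defect k d N =
    (if d + 2 \<le> N then real ((k - d) * (d + 3 + (d + 1) * (k - d - 1))) / (2 * real (N - d - 1)) else 1)"

lemma odd_kgraph_defect_tendsto_0: "odd_kgraph_defect k d \<longlonglongrightarrow> 0"
proof -
  define c where "c = real ((k - d) * (d + 3 + (d + 1) * (k - d - 1)))"
  have "(\<lambda>j. odd_kgraph_defect k d (j + (d + 2))) = (\<lambda>j. (c / 2) / real (Suc j))"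
    unfolding odd_kgraph_defect_def c_def by simp
  moreover have "(\<lambda>j. (c / 2) / real (Suc j)) \<longlonglongrightarrow> 0"
    using LIMSEQ_Suc[OF lim_const_over_n[of "c / 2"]] .
  ultimately show ?thesis
    by (intro LIMSEQ_offset[of "odd_kgraph_defect k d" "d + 2"]) simp
qed

lemma min_deg_odd_kgraph_ge:
  assumes "d < k" "2 * q \<le> N" "N \<le> 2 * q + 3"
  shows "(1 / 2 - odd_kgraph_defect k d N) * real ((N - d) choose (k - d))
         \<le> real (min_deg d {..<N} (odd_kgraph k N (evens q)))"
proof (cases "d + 2 \<le> N")
  case True
  show ?thesis
  proof (rule min_deg_ge)
    show "d \<le> N"
      using True by simp
    fix S assume "S \<subseteq> {..<N}" "card S = d"
    define M where "M = real (N - d - 1)"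
    define c where "c = real ((k - d) * (d + 3 + (d + 1) * (k - d - 1)))"
    define C where "C = real ((N - d) choose (k - d))"
    define h where "h = real (hdeg (odd_kgraph k N (evens q)) S)"
    have "0 < M"
      using True unfolding M_def by simp
    have "M * C \<le> 2 * M * h + c * C"
      using of_nat_mono[OF hdeg_odd_kgraph_ge[OF assms \<open>S \<subseteq> {..<N}\<close> \<open>card S = d\<close>], where ?'a = real]
      unfolding M_def c_def C_def h_def by simp
    with \<open>0 < M\<close> have "(1 / 2 - c / (2 * M)) * C \<le> h"
      by (simp add: field_simps)
    then show "(1 / 2 - odd_kgraph_defect k d N) * C \<le> real (hdeg (odd_kgraph k N (evens q)) S)"
      using True unfolding odd_kgraph_defect_def c_def M_def h_def by simp
  qed
qed (simp add: odd_kgraph_defect_def)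

lemma odd_kgraph_host:
  assumes "d < k" "3 \<le> k" "even n" "0 < n"
  shows "let N = (k - 1) * n - k + 2 in \<exists>E. kgraph k {..<N} E \<and>
    real (min_deg d {..<N} E) \<ge> (1/2 - odd_kgraph_defect k d N) * real ((N - d) choose (k - d)) \<and>
    \<not> (\<exists>T. is_tree n T \<and> (\<forall>v<n. odd (gdeg T v)) \<and>
         contains {..<N} E (exp_vertices k n T) (exp_edges k T))"
proof -
  define N where "N = (k - 1) * n - k + 2"
  define A where "A = evens (2 * (N div 4))"
  have "A \<subseteq> {..<N}"
    unfolding A_def evens_def by auto
  have "even (card A)"
    unfolding A_def card_evens by simp
  have "(1/2 - odd_kgraph_defect k d N) * real ((N - d) choose (k - d))
      \<le> real (min_deg d {..<N} (odd_kgraph k N A))"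
    unfolding A_def using assms(1) by (rule min_deg_odd_kgraph_ge) simp_all
  moreover have "\<not> contains {..<N} (odd_kgraph k N A) (exp_vertices k n T) (exp_edges k T)"
    if "is_tree n T" "\<forall>v<n. odd (gdeg T v)" for T
    using odd_kgraph_excludes_odd_tree_expansions[OF assms(2-4) N_def \<open>A \<subseteq> {..<N}\<close> \<open>even (card A)\<close> that] .
  ultimately show ?thesis
    unfolding Let_def N_def[symmetric] using kgraph_odd_kgraph by blast
qed

text \<open>For \<open>k = 2\<close> the expansion is the tree itself, so the number of its vertices
  does not force \<open>n - 1\<close> edges; connectivity alone excludes it from two disjoint cliques.\<close>
lemma two_cliques_host:
  assumes "k = 2" "d = 1" "even n" "0 < n"
  shows "let N = (k - 1) * n - k + 2 in \<exists>E. kgraph k {..<N} E \<and>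
    real (min_deg d {..<N} E) \<ge> (1/2 - 1 / real N) * real ((N - d) choose (k - d)) \<and>
    \<not> (\<exists>T. is_tree n T \<and> (\<forall>v<n. odd (gdeg T v)) \<and>
         contains {..<N} E (exp_vertices k n T) (exp_edges k T))"
proof -
  obtain h where h: "n = 2 * h" "0 < h"
    using assms(3,4) by (auto elim!: evenE)
  then have N: "(k - 1) * n - k + 2 = n"
    using assms(1) by simp
  have "(1/2 - 1 / real n) * real ((n - d) choose (k - d)) \<le> real (min_deg d {..<n} (two_cliques n h))"
    using min_deg_two_cliques_ge[OF \<open>0 < h\<close>] unfolding h(1) assms(1,2) by simp
  moreover have "\<not> contains {..<n} (two_cliques n h) (exp_vertices k n T) (exp_edges k T)"
    if "is_tree n T" for T
    using two_cliques_excludes_tree_expansions[OF \<open>0 < h\<close> _ that] h assms(1) by simp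
  ultimately show ?thesis
    unfolding Let_def N using kgraph_two_cliques[of n h] assms(1) by blast
qed

theorem theorem3p3:
  fixes k d :: nat
  assumes "1 \<le> d" and "d < k"
  shows "\<exists>f :: nat \<Rightarrow> real. f \<longlonglongrightarrow> 0 \<and>
    (\<forall>n::nat. even n \<and> 0 < n \<longrightarrow>
      (let N = (k - 1) * n - k + 2 in
        \<exists>E :: nat set set. kgraph k {..<N} E \<and>
          real (min_deg d {..<N} E) \<ge> (1/2 - f N) * real ((N - d) choose (k - d)) \<and>
          \<not> (\<exists>T. is_tree n T \<and> (\<forall>v<n. odd (gdeg T v)) \<and>
               contains {..<N} E (exp_vertices k n T) (exp_edges k T))))"
proof (cases "k = 2")
  case True
  with assms have "d = 1"
    by simp
  show ?thesis
    by (intro exI[of _ "\<lambda>N. 1 / real N"] conjI allI impI lim_const_over_n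
        two_cliques_host[OF True \<open>d = 1\<close>]) simp_all
next
  case False
  with assms have "3 \<le> k"
    by simp
  show ?thesis
    by (intro exI[of _ "odd_kgraph_defect k d"] conjI allI impI odd_kgraph_defect_tendsto_0
        odd_kgraph_host[OF \<open>d < k\<close> \<open>3 \<le> k\<close>]) simp_all
qed

end
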